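(* Let $Z\in\mathbb R^{n\times d}$ ($d\ge n$) with $ZZ^\top$ nonsingular, let $\Sigma$ be symmetric with eigenvalues in $[1/\kappa,1]$, $X=Z\Sigma^{1/2}$, $\sigma>0$, and let $\rho\ge0$ satisfy $I-\frac\rho dZ^\top Z\succ0$. Then $$\mathcal P(A(\rho,\Sigma);\Sigma)-\mathcal P(A(0,\Sigma);\Sigma)\ge\frac{\rho^2\sigma^4}{d}\mathrm{Tr}\Big(\big(I-\tfrac\rho dZZ^\top\big)^{-2}\tfrac{ZZ^\top}{d}\big(\tfrac{ZZ^\top}{d}+\sigma^2I\big)^{-1}\Big),$$ $$\mathcal T(A(\rho,\Sigma);\Sigma)-\mathcal T(A(0,\Sigma);\Sigma)\le\frac{\kappa\sigma^4}{n}\mathrm{Tr}\Big(\big((I-\tfrac\rho dZZ^\top)^{-2}-I\big)\big(\tfrac1dZZ^\top+\kappa\sigma^2I\big)^{-1}\Big).$$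
   Context: $\mathcal P(A;\Sigma):=\frac1d\|\Sigma^{1/2}(AX-I)\|_F^2+\sigma^2\|\Sigma^{1/2}A\|_F^2$, $\mathcal T(A;\Sigma):=\frac1{nd}\|XAX-X\|_F^2+\frac{\sigma^2}{n}\|XA-I\|_F^2$, and $A(\rho,\Sigma):=\big(I-\rho\sigma^2(\Sigma-\frac\rho dX^\top X)^{-1}\big)(X^\top X+d\sigma^2I)^{-1}X^\top$, defined when $\Sigma-\frac\rho dX^\top X\succ0$ (equivalently $I-\frac\rho dZ^\top Z\succ0$). *)

theory Defs
  imports "HOL-Analysis.Analysis"
begin

definition frob2 :: "real^'c^'r \<Rightarrow> real" where
  "frob2 M = (\<Sum>i\<in>UNIV. \<Sum>j\<in>UNIV. (M $ i $ j)^2)"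

definition psd :: "real^'n^'n \<Rightarrow> bool" where
  "psd M \<longleftrightarrow> transpose M = M \<and> (\<forall>x. 0 \<le> x \<bullet> (M *v x))"

definition posdef :: "real^'n^'n \<Rightarrow> bool" where
  "posdef M \<longleftrightarrow> transpose M = M \<and> (\<forall>x. x \<noteq> 0 \<longrightarrow> 0 < x \<bullet> (M *v x))"

definition mat_eigenvalue :: "real^'n^'n \<Rightarrow> real \<Rightarrow> bool" where
  "mat_eigenvalue M l \<longleftrightarrow> (\<exists>v. v \<noteq> 0 \<and> M *v v = l *\<^sub>R v)"

definition matsqrt :: "real^'n^'n \<Rightarrow> real^'n^'n" where
  "matsqrt S = (THE R. psd R \<and> R ** R = S)"

definition calP :: "real \<Rightarrow> real^'d^'n \<Rightarrow> real^'d^'d \<Rightarrow> real^'n^'d \<Rightarrow> real" where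
  "calP \<sigma> X S A =
     frob2 (matsqrt S ** (A ** X - mat 1)) / real CARD('d)
     + \<sigma>^2 * frob2 (matsqrt S ** A)"

text \<open>Training risk T(A;Sigma) (depends on Sigma only through X).\<close>
definition calT :: "real \<Rightarrow> real^'d^'n \<Rightarrow> real^'n^'d \<Rightarrow> real" where
  "calT \<sigma> X A =
     frob2 (X ** A ** X - X) / (real CARD('n) * real CARD('d))
     + \<sigma>^2 / real CARD('n) * frob2 (X ** A - mat 1)"

definition Arho :: "real \<Rightarrow> real \<Rightarrow> real^'d^'n \<Rightarrow> real^'d^'d \<Rightarrow> real^'n^'d" where
  "Arho \<sigma> \<rho> X S =
     (mat 1 - (\<rho> * \<sigma>^2) *\<^sub>R matrix_inv (S - (\<rho> / real CARD('d)) *\<^sub>R (transpose X ** X)))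
     ** matrix_inv (transpose X ** X + (real CARD('d) * \<sigma>^2) *\<^sub>R mat 1)
     ** transpose X"

end

theory Submission
  imports Defs
begin

(* Write X = Z S^(1/2), Q = (X X^T + d sigma^2 I)^-1 and M = (I - rho/d Z Z^T)^-1.  Pushing Z and
   S^(1/2) through the inverses gives
     A(rho) = A(0) - rho sigma^2 S^(-1/2) (I - rho/d Z^T Z)^-1 Z^T Q,
     X A(rho) - I = - d sigma^2 M Q.
   As A(0) minimises the population risk, P(A(rho)) - P(A(0)) is a quadratic form in the deviation,
   equal to rho^2 sigma^4/d tr(M^2 Z Z^T Q), while T(A(rho)) = d sigma^4/n tr(M^2 Q).  The spectral
   bounds 1/kappa <= S <= 1 give Z Z^T/kappa <= X X^T <= Z Z^T in the Loewner order, hence after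
   inversion two-sided bounds on Q; since M^2 - I and M^2 Z Z^T are positive semidefinite and
   tr(P A) is monotone in A for P >= 0, both inequalities follow. *)

lemma matrix_diff_ldistrib: "(A::real^'m^'n) ** (B - C) = A ** B - A ** C"
  by (simp add: matrix_matrix_mult_def vec_eq_iff sum_subtractf right_diff_distrib)

lemma matrix_add_rdistrib: "((B::real^'m^'n) + C) ** A = B ** A + C ** A"
  by (simp add: matrix_matrix_mult_def vec_eq_iff sum.distrib distrib_right)

lemma matrix_diff_rdistrib: "((B::real^'m^'n) - C) ** A = B ** A - C ** A"
  by (simp add: matrix_matrix_mult_def vec_eq_iff sum_subtractf left_diff_distrib)

lemma matrix_uminus_left: "(- (B::real^'m^'n)) ** A = - (B ** A)"
  by (simp add: matrix_matrix_mult_def vec_eq_iff sum_negf)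

lemma matrix_uminus_right: "(A::real^'m^'n) ** (- B) = - (A ** B)"
  by (simp add: matrix_matrix_mult_def vec_eq_iff sum_negf)

lemma matrix_scaleR_left: "(k *\<^sub>R (A::real^'m^'n)) ** B = k *\<^sub>R (A ** B)"
  by (simp add: scalar_matrix_assoc)

lemma matrix_scaleR_right: "(A::real^'m^'n) ** (k *\<^sub>R B) = k *\<^sub>R (A ** B)"
  by (simp add: matrix_scalar_ac scalar_matrix_assoc)

lemma transpose_add: "transpose ((A::real^'m^'n) + B) = transpose A + transpose B"
  by (simp add: transpose_def vec_eq_iff)

lemma transpose_diff: "transpose ((A::real^'m^'n) - B) = transpose A - transpose B"
  by (simp add: transpose_def vec_eq_iff)

lemma transpose_uminus: "transpose (- (A::real^'m^'n)) = - transpose A"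
  by (simp add: transpose_def vec_eq_iff)

lemmas matrix_ring_simps = matrix_mul_assoc matrix_add_ldistrib matrix_diff_ldistrib
  matrix_add_rdistrib matrix_diff_rdistrib matrix_uminus_left matrix_uminus_right
  matrix_scaleR_left matrix_scaleR_right matrix_transpose_mul
  transpose_add transpose_diff transpose_uminus transpose_scalar

lemma column_matrix_mult: "column j ((A::real^'m^'n) ** B) = A *v column j B"
  by (simp add: column_def matrix_matrix_mult_def matrix_vector_mult_def vec_eq_iff)

lemma inner_matrix_vector_transpose: "x \<bullet> ((U::real^'n^'m) *v w) = (transpose U *v x) \<bullet> w"
  by (simp add: dot_lmul_matrix)

lemma inner_symmetric_matrix:
  fixes A :: "real^'n^'n"
  assumes "transpose A = A"
  shows "(A *v x) \<bullet> y = x \<bullet> (A *v y)"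
  by (metis assms dot_lmul_matrix transpose_matrix_vector)

lemma quadratic_form_transpose_mult:
  "x \<bullet> ((transpose A ** A) *v x) = (A *v x) \<bullet> (A *v (x::real^'m))"
  by (simp only: matrix_vector_mul_assoc[symmetric] inner_matrix_vector_transpose
      transpose_transpose)

lemma quadratic_form_conj:
  "x \<bullet> (((U::real^'n^'m) ** D ** transpose U) *v x)
    = (transpose U *v x) \<bullet> (D *v (transpose U *v x))"
  by (simp only: matrix_vector_mul_assoc[symmetric] inner_matrix_vector_transpose)

definition diag_mat :: "('n \<Rightarrow> real) \<Rightarrow> real^'n^'n" where
  "diag_mat l = (\<chi> i j. if i = j then l i else 0)"

lemma matrix_mult_diag_mat_nth: "((M::real^'n^'m) ** diag_mat l) $ i $ j = M $ i $ j * l j"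
  by (simp add: matrix_matrix_mult_def diag_mat_def if_distrib if_distribR cong: if_cong)

lemma diag_mat_mult_nth: "(diag_mat l ** (M::real^'m^'n)) $ i $ j = l i * M $ i $ j"
  by (simp add: matrix_matrix_mult_def diag_mat_def if_distrib if_distribR cong: if_cong)

lemma diag_mat_mult_diag_mat: "diag_mat a ** diag_mat b = diag_mat (\<lambda>i. a i * b i)"
  by (simp add: vec_eq_iff matrix_mult_diag_mat_nth) (simp add: diag_mat_def)

lemma transpose_diag_mat: "transpose (diag_mat l) = diag_mat l"
  by (simp add: vec_eq_iff transpose_def diag_mat_def)

lemma quadratic_form_diag_mat: "x \<bullet> (diag_mat l *v x) = (\<Sum>i\<in>UNIV. l i * (x $ i)^2)"
  by (simp add: inner_vec_def matrix_vector_mult_def diag_mat_def if_distrib if_distribR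
      power2_eq_square mult_ac cong: if_cong)

section \<open>Spectral theorem for symmetric matrices\<close>

lemma linear_coeff_zero_if_quadratic_nonpos:
  fixes a b :: real
  assumes "\<And>t. 2*t*a + t^2*b \<le> 0"
  shows "a = 0"
proof (rule ccontr)
  assume "a \<noteq> 0"
  define c where "c = \<bar>b\<bar> + 1"
  have c: "c > 0" "2*c + b > 0" unfolding c_def by auto
  have "(2*(a/c)*a + (a/c)^2*b) * c^2 \<le> 0"
    using assms[of "a/c"] by (intro mult_nonpos_nonneg) auto
  moreover have "(2*(a/c)*a + (a/c)^2*b) * c^2 = a^2 * (2*c + b)"
    using c by (simp add: field_simps power2_eq_square)
  ultimately have "a^2 * (2*c + b) \<le> 0" by simp
  thus False using c \<open>a \<noteq> 0\<close> by (simp add: mult_le_0_iff)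
qed

text \<open>Perturbing the maximiser v by t w inside the subspace shows that w \<bullet> A v vanishes for every
  w orthogonal to v.\<close>
lemma eigenvector_if_max_quadratic_form:
  fixes A :: "real^'n^'n"
  assumes sym: "transpose A = A" and V: "subspace V" "\<forall>x\<in>V. A *v x \<in> V"
    and v: "v \<in> V" "norm v = 1"
    and max: "\<And>y. y \<in> V \<Longrightarrow> norm y = 1 \<Longrightarrow> y \<bullet> (A *v y) \<le> v \<bullet> (A *v v)"
  shows "A *v v = (v \<bullet> (A *v v)) *\<^sub>R v"
proof -
  define g where "g = (\<lambda>x::real^'n. x \<bullet> (A *v x))"
  define l where "l = g v"
  have vv: "v \<bullet> v = 1" using v(2) by (simp add: norm_eq_1)
  have first_variation: "w \<bullet> (A *v v) = 0" if wV: "w \<in> V" and wv: "w \<bullet> v = 0" for w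
  proof (rule linear_coeff_zero_if_quadratic_nonpos[of _ "g w - l * (w \<bullet> w)"])
    fix t :: real
    define y where "y = v + t *\<^sub>R w"
    have yy: "y \<bullet> y = 1 + t^2 * (w \<bullet> w)"
      unfolding y_def using vv wv
      by (simp add: inner_add_left inner_add_right inner_commute power2_eq_square)
    hence ypos: "y \<bullet> y > 0" by (simp add: add_pos_nonneg)
    have "y \<in> V" unfolding y_def using V(1) v(1) wV by (simp add: subspace_add subspace_scale)
    hence "(1/norm y) *\<^sub>R y \<in> V" using V(1) by (simp add: subspace_scale)
    moreover have "norm ((1/norm y) *\<^sub>R y) = 1" using ypos by (simp add: inner_gt_zero_iff)
    ultimately have "g ((1/norm y) *\<^sub>R y) \<le> l" using max unfolding g_def l_def by blast
    moreover have "g ((1/norm y) *\<^sub>R y) = g y / (y \<bullet> y)"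
      by (simp add: g_def matrix_vector_mult_scaleR power2_eq_square power_divide
          power2_norm_eq_inner[symmetric])
    ultimately have gy: "g y \<le> l * (y \<bullet> y)" using ypos by (simp add: divide_le_eq)
    have "v \<bullet> (A *v w) = w \<bullet> (A *v v)"
      using inner_symmetric_matrix[OF sym, of w v] by (simp add: inner_commute)
    hence "g y = l + 2*t*(w \<bullet> (A *v v)) + t^2 * g w"
      by (simp add: g_def y_def l_def matrix_vector_right_distrib matrix_vector_mult_scaleR
          inner_add_left inner_add_right power2_eq_square algebra_simps)
    with gy yy show "2*t*(w \<bullet> (A *v v)) + t^2 * (g w - l * (w \<bullet> w)) \<le> 0"
      by (simp add: algebra_simps)
  qed
  define w where "w = A *v v - l *\<^sub>R v"
  have wV: "w \<in> V" unfolding w_def using V v(1) by (simp add: subspace_diff subspace_scale)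
  have wv: "w \<bullet> v = 0" unfolding w_def l_def g_def using vv
    by (simp add: inner_diff_left inner_commute[of "A *v v" v])
  have "w \<bullet> w = w \<bullet> (A *v v) - l * (w \<bullet> v)"
    by (simp add: w_def inner_diff_right)
  hence "w = 0" using first_variation[OF wV wv] wv by simp
  thus ?thesis unfolding w_def l_def g_def by simp
qed

lemma symmetric_matrix_eigenvector_in_invariant_subspace:
  fixes A :: "real^'n^'n"
  assumes sym: "transpose A = A" and V: "subspace V" "\<forall>x\<in>V. A *v x \<in> V"
    and x0: "x0 \<in> V" "x0 \<noteq> 0"
  obtains v l where "v \<in> V" "norm v = 1" "A *v v = l *\<^sub>R v"
proof -
  define C where "C = sphere (0::real^'n) 1 \<inter> V"
  have "compact C" unfolding C_def using closed_subspace[OF V(1)] by (intro compact_Int_closed) auto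
  moreover have "(1/norm x0) *\<^sub>R x0 \<in> C" using x0 V(1) unfolding C_def by (simp add: subspace_scale)
  hence "C \<noteq> {}" by auto
  moreover have "continuous_on C (\<lambda>x. x \<bullet> (A *v x))"
    by (intro continuous_intros linear_continuous_on_compose[OF _ matrix_vector_mul_linear]
        continuous_on_id)
  ultimately obtain v where "v \<in> C" and "\<And>y. y \<in> C \<Longrightarrow> y \<bullet> (A *v y) \<le> v \<bullet> (A *v v)"
    using continuous_attains_sup by metis
  hence "v \<in> V" "norm v = 1" "A *v v = (v \<bullet> (A *v v)) *\<^sub>R v"
    using eigenvector_if_max_quadratic_form[OF sym V, of v] unfolding C_def by auto
  thus ?thesis by (rule that)
qed

lemma symmetric_matrix_orthogonal_eigenvectors_invariant:
  fixes A :: "real^'n^'n"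
  assumes sym: "transpose A = A" and B: "\<forall>u\<in>B. \<exists>l. A *v u = l *\<^sub>R u"
    and z: "\<forall>u\<in>B. orthogonal u z"
  shows "\<forall>u\<in>B. orthogonal u (A *v z)"
proof
  fix u assume "u \<in> B"
  then obtain l where "A *v u = l *\<^sub>R u" using B by blast
  hence "u \<bullet> (A *v z) = l * (u \<bullet> z)"
    using inner_symmetric_matrix[OF sym, of u z] by simp
  thus "orthogonal u (A *v z)" using z \<open>u \<in> B\<close> unfolding orthogonal_def by simp
qed

lemma symmetric_matrix_orthonormal_eigenvectors:
  fixes A :: "real^'n^'n"
  assumes sym: "transpose A = A" and "k \<le> CARD('n)"
  shows "\<exists>B. finite B \<and> card B = k \<and> pairwise orthogonal B \<and>
            (\<forall>u\<in>B. norm u = 1 \<and> (\<exists>l. A *v u = l *\<^sub>R u))"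
  using \<open>k \<le> CARD('n)\<close>
proof (induction k)
  case 0
  show ?case by (intro exI[of _ "{}"]) auto
next
  case (Suc k)
  then obtain B where fB: "finite B" and cB: "card B = k" and oB: "pairwise orthogonal B"
    and eB: "\<forall>u\<in>B. norm u = 1 \<and> (\<exists>l. A *v u = l *\<^sub>R u)" by auto
  define V where "V = {y. \<forall>x\<in>B. orthogonal x y}"
  have "dim B < DIM(real^'n)"
    using dim_le_card[OF _ fB, of B] span_superset[of B] cB Suc.prems by simp
  then obtain x where x0: "x \<noteq> 0" and xo: "\<And>y. y \<in> span B \<Longrightarrow> orthogonal x y"
    by (rule orthogonal_to_subspace_exists) blast
  have xV: "x \<in> V" using xo[OF span_base] unfolding V_def by (simp add: orthogonal_commute)
  have AV: "\<forall>z\<in>V. A *v z \<in> V"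
    using symmetric_matrix_orthogonal_eigenvectors_invariant[OF sym] eB unfolding V_def by blast
  obtain v l where vV: "v \<in> V" and nv: "norm v = 1" and ev: "A *v v = l *\<^sub>R v"
    using symmetric_matrix_eigenvector_in_invariant_subspace[OF sym _ AV xV x0]
      subspace_orthogonal_to_vectors unfolding V_def by blast
  have vnB: "v \<notin> B"
  proof
    assume "v \<in> B"
    hence "v \<bullet> v = 0" using vV unfolding V_def orthogonal_def by blast
    thus False using nv by simp
  qed
  show ?case
  proof (intro exI[of _ "insert v B"] conjI)
    show "finite (insert v B)" using fB by simp
    show "card (insert v B) = Suc k" using fB vnB cB by simp
    show "pairwise orthogonal (insert v B)"
      using oB vV vnB unfolding V_def pairwise_insert orthogonal_def by (auto simp: inner_commute)
    show "\<forall>u\<in>insert v B. norm u = 1 \<and> (\<exists>l. A *v u = l *\<^sub>R u)" using eB nv ev by auto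
  qed
qed

theorem symmetric_matrix_diagonalizable:
  fixes A :: "real^'n^'n"
  assumes sym: "transpose A = A"
  shows "\<exists>U l. orthogonal_matrix U \<and> A = U ** diag_mat l ** transpose U"
proof -
  obtain B where fB: "finite B" and cB: "card B = CARD('n)" and oB: "pairwise orthogonal B"
    and eB: "\<forall>u\<in>B. norm u = 1 \<and> (\<exists>l. A *v u = l *\<^sub>R u)"
    using symmetric_matrix_orthonormal_eigenvectors[OF sym, of "CARD('n)"] by auto
  obtain f where f: "bij_betw f (UNIV::'n set) B"
    by (metis cB fB finite_class.finite_UNIV finite_same_card_bij)
  have fB': "\<And>i. f i \<in> B" using bij_betwE[OF f] by blast
  define U where "U = (\<chi> i j. f j $ i)"
  define l where "l = (\<lambda>j. SOME c. A *v f j = c *\<^sub>R f j)"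
  have colU: "column j U = f j" for j by (simp add: U_def column_def)
  have ortho: "orthogonal_matrix U"
    unfolding orthogonal_matrix_orthonormal_columns colU
  proof (intro conjI allI impI)
    show "norm (f i) = 1" for i using eB fB' by blast
    show "orthogonal (f i) (f j)" if "i \<noteq> j" for i j
    proof -
      have "f i \<noteq> f j" using f that unfolding bij_betw_def inj_on_def by blast
      thus ?thesis using oB fB' unfolding pairwise_def by blast
    qed
  qed
  have ev: "A *v f j = l j *\<^sub>R f j" for j
  proof -
    obtain c where "A *v f j = c *\<^sub>R f j" using eB fB' by blast
    thus ?thesis unfolding l_def by (rule someI)
  qed
  have "column j (A ** U) = l j *\<^sub>R f j" for j by (simp add: column_matrix_mult colU ev)
  moreover have "column j (U ** diag_mat l) = l j *\<^sub>R f j" for j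
    by (simp add: column_def matrix_mult_diag_mat_nth vec_eq_iff U_def mult.commute)
  ultimately have "column j (A ** U) = column j (U ** diag_mat l)" for j by simp
  hence AU: "A ** U = U ** diag_mat l" by (simp add: vec_eq_iff column_def)
  have "A = A ** (U ** transpose U)" using ortho by (simp add: orthogonal_matrix_def)
  also have "\<dots> = U ** diag_mat l ** transpose U" using AU by (simp add: matrix_mul_assoc)
  finally show ?thesis using ortho by blast
qed

lemma transpose_mult_mult_nth:
  "(transpose (U::real^'n^'m) ** M ** U) $ i $ j = column i U \<bullet> (M *v column j U)"
proof -
  have "(transpose U ** (M ** U)) $ i $ j = column i U \<bullet> column j (M ** U)"
    by (simp add: matrix_matrix_mult_def transpose_def column_def inner_vec_def)
  thus ?thesis by (simp add: column_matrix_mult matrix_mul_assoc)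
qed

lemma orthogonal_matrix_cancel:
  fixes U :: "real^'n^'n"
  assumes "orthogonal_matrix U"
  shows "transpose U ** U = mat 1" "U ** transpose U = mat 1"
    "A ** transpose U ** U = A" "B ** U ** transpose U = B"
proof -
  show U: "transpose U ** U = mat 1" "U ** transpose U = mat 1"
    using assms unfolding orthogonal_matrix_def by auto
  show "A ** transpose U ** U = A" "B ** U ** transpose U = B"
    by (simp_all only: matrix_mul_assoc[symmetric] U matrix_mul_rid)
qed

lemma quadratic_form_eigen_expansion:
  fixes S :: "real^'n^'n"
  assumes sym: "transpose S = S"
  obtains l :: "'n \<Rightarrow> real" and y :: "real^'n" where "\<forall>i. mat_eigenvalue S (l i)"
    "x \<bullet> (S *v x) = (\<Sum>i\<in>UNIV. l i * (y $ i)^2)" "x \<bullet> x = (\<Sum>i\<in>UNIV. (y $ i)^2)"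
proof -
  obtain U :: "real^'n^'n" and l where U: "orthogonal_matrix U"
    and S: "S = U ** diag_mat l ** transpose U"
    using symmetric_matrix_diagonalizable[OF sym] by blast
  note U1 = orthogonal_matrix_cancel[OF U]
  have ev: "mat_eigenvalue S (l j)" for j
  proof -
    have "column j U \<noteq> 0"
      using U by (metis norm_zero orthogonal_matrix_orthonormal_columns zero_neq_one)
    moreover have "S ** U = U ** diag_mat l" unfolding S by (simp add: matrix_mul_assoc U1)
    hence "S *v column j U = column j (U ** diag_mat l)" by (metis column_matrix_mult)
    hence "S *v column j U = l j *\<^sub>R column j U"
      by (simp add: column_def matrix_mult_diag_mat_nth vec_eq_iff mult.commute)
    ultimately show ?thesis unfolding mat_eigenvalue_def by blast
  qed
  define y where "y = transpose U *v x"
  have Sx: "x \<bullet> (S *v x) = (\<Sum>i\<in>UNIV. l i * (y $ i)^2)"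
    unfolding y_def S quadratic_form_conj quadratic_form_diag_mat ..
  have xx: "x \<bullet> x = (\<Sum>i\<in>UNIV. (y $ i)^2)"
  proof -
    have "U *v y = x"
      unfolding y_def by (simp only: matrix_vector_mul_assoc U1 matrix_vector_mul_lid)
    hence "x \<bullet> x = x \<bullet> (U *v y)" by simp
    also have "\<dots> = y \<bullet> y" unfolding inner_matrix_vector_transpose y_def ..
    finally show ?thesis by (simp add: inner_vec_def power2_eq_square)
  qed
  show ?thesis using ev Sx xx by (intro that[of l y]) auto
qed

lemma quadratic_form_ge_if_eigenvalues_ge:
  fixes S :: "real^'n^'n"
  assumes "transpose S = S" "\<And>l. mat_eigenvalue S l \<Longrightarrow> a \<le> l"
  shows "a * (x \<bullet> x) \<le> x \<bullet> (S *v x)"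
proof -
  obtain l :: "'n \<Rightarrow> real" and y :: "real^'n" where "\<forall>i. mat_eigenvalue S (l i)"
    "x \<bullet> (S *v x) = (\<Sum>i\<in>UNIV. l i * (y $ i)^2)" "x \<bullet> x = (\<Sum>i\<in>UNIV. (y $ i)^2)"
    using quadratic_form_eigen_expansion[OF assms(1), where x = x] .
  thus ?thesis using assms(2) by (simp add: sum_distrib_left sum_mono mult_right_mono)
qed

lemma quadratic_form_le_if_eigenvalues_le:
  fixes S :: "real^'n^'n"
  assumes "transpose S = S" "\<And>l. mat_eigenvalue S l \<Longrightarrow> l \<le> b"
  shows "x \<bullet> (S *v x) \<le> b * (x \<bullet> x)"
proof -
  obtain l :: "'n \<Rightarrow> real" and y :: "real^'n" where "\<forall>i. mat_eigenvalue S (l i)"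
    "x \<bullet> (S *v x) = (\<Sum>i\<in>UNIV. l i * (y $ i)^2)" "x \<bullet> x = (\<Sum>i\<in>UNIV. (y $ i)^2)"
    using quadratic_form_eigen_expansion[OF assms(1), where x = x] .
  thus ?thesis using assms(2) by (simp add: sum_distrib_left sum_mono mult_right_mono)
qed

section \<open>Positive semidefinite matrices\<close>

lemma psd_transpose_mult: "psd (transpose A ** (A::real^'m^'k))"
  unfolding psd_def by (simp add: matrix_transpose_mul quadratic_form_transpose_mult)

lemma psd_conj_diag_mat:
  assumes "\<And>i. l i \<ge> 0"
  shows "psd ((U::real^'n^'n) ** diag_mat l ** transpose U)"
  unfolding psd_def
proof (intro conjI allI)
  show "transpose (U ** diag_mat l ** transpose U) = U ** diag_mat l ** transpose U"
    by (simp add: matrix_transpose_mul transpose_diag_mat matrix_mul_assoc)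
  show "0 \<le> x \<bullet> ((U ** diag_mat l ** transpose U) *v x)" for x
    unfolding quadratic_form_conj quadratic_form_diag_mat using assms by (intro sum_nonneg) simp
qed

lemma psd_diagonalizable:
  fixes P :: "real^'n^'n"
  assumes "psd P"
  shows "\<exists>U l. orthogonal_matrix U \<and> P = U ** diag_mat l ** transpose U \<and> (\<forall>i. l i \<ge> 0)"
proof -
  obtain U :: "real^'n^'n" and l where U: "orthogonal_matrix U"
    and P: "P = U ** diag_mat l ** transpose U"
    using symmetric_matrix_diagonalizable assms unfolding psd_def by blast
  have "transpose U ** P ** U = diag_mat l"
    unfolding P by (simp add: matrix_mul_assoc orthogonal_matrix_cancel[OF U])
  hence "l i = column i U \<bullet> (P *v column i U)" for i
    using transpose_mult_mult_nth[of U P i i] by (simp add: diag_mat_def)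
  hence "l i \<ge> 0" for i using assms unfolding psd_def by simp
  thus ?thesis using U P by blast
qed

text \<open>Conjugating by the eigenbases of S and of a square root R, the
  change of basis W intertwines the eigenvalues of S with the squares of those of R, hence
  it also intertwines their square roots.\<close>
lemma psd_sqrt_eq_conj_diag_mat:
  fixes S R U :: "real^'n^'n"
  assumes U: "orthogonal_matrix U" and S: "S = U ** diag_mat l ** transpose U"
    and R: "psd R" "R ** R = S"
  shows "R = U ** diag_mat (\<lambda>i. sqrt (l i)) ** transpose U"
proof -
  obtain V :: "real^'n^'n" and m where V: "orthogonal_matrix V"
    and Rm: "R = V ** diag_mat m ** transpose V" and m0: "\<forall>i. m i \<ge> 0"
    using psd_diagonalizable[OF R(1)] by blast
  note U1 = orthogonal_matrix_cancel[OF U] and V1 = orthogonal_matrix_cancel[OF V]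
  define W where "W = transpose U ** V"
  have "S ** V = V ** (diag_mat m ** diag_mat m)"
    unfolding R(2)[symmetric] Rm by (simp add: matrix_mul_assoc V1)
  hence "transpose U ** S ** V = W ** diag_mat (\<lambda>i. m i * m i)"
    unfolding W_def by (simp add: matrix_mul_assoc[symmetric] diag_mat_mult_diag_mat)
  moreover have "transpose U ** S ** V = diag_mat l ** W"
    unfolding S W_def by (simp add: matrix_mul_assoc U1)
  ultimately have "(diag_mat l ** W) $ i $ j = (W ** diag_mat (\<lambda>i. m i * m i)) $ i $ j" for i j
    by simp
  hence eq: "l i * W $ i $ j = W $ i $ j * (m j * m j)" for i j
    by (simp only: diag_mat_mult_nth matrix_mult_diag_mat_nth)
  have "sqrt (l i) * W $ i $ j = W $ i $ j * m j" for i j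
  proof (cases "W $ i $ j = 0")
    case False
    hence "l i = m j * m j" using eq[of i j] by simp
    thus ?thesis using m0 by (simp add: real_sqrt_mult)
  qed simp
  hence commute: "diag_mat (\<lambda>i. sqrt (l i)) ** W = W ** diag_mat m"
    by (simp add: vec_eq_iff diag_mat_mult_nth matrix_mult_diag_mat_nth)
  have "U ** diag_mat (\<lambda>i. sqrt (l i)) ** transpose U
      = U ** (diag_mat (\<lambda>i. sqrt (l i)) ** W) ** transpose V"
    unfolding W_def by (simp add: matrix_mul_assoc V1)
  also have "\<dots> = (U ** W) ** diag_mat m ** transpose V"
    unfolding commute by (simp add: matrix_mul_assoc)
  also have "U ** W = V" unfolding W_def by (simp add: matrix_mul_assoc U1)
  finally show ?thesis using Rm by simp
qed

lemma matsqrt_correct: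
  fixes S :: "real^'n^'n"
  assumes "psd S"
  shows "psd (matsqrt S)" and "matsqrt S ** matsqrt S = S"
proof -
  obtain U :: "real^'n^'n" and l where U: "orthogonal_matrix U"
    and S: "S = U ** diag_mat l ** transpose U" and l0: "\<forall>i. l i \<ge> 0"
    using psd_diagonalizable[OF assms] by blast
  define R where "R = U ** diag_mat (\<lambda>i. sqrt (l i)) ** transpose U"
  have "psd R" unfolding R_def using psd_conj_diag_mat[of "\<lambda>i. sqrt (l i)" U] l0 by simp
  moreover have "R ** R = S"
  proof -
    have "R ** R = U ** (diag_mat (\<lambda>i. sqrt (l i)) ** diag_mat (\<lambda>i. sqrt (l i))) ** transpose U"
      unfolding R_def by (simp add: matrix_mul_assoc orthogonal_matrix_cancel[OF U])
    also have "diag_mat (\<lambda>i. sqrt (l i)) ** diag_mat (\<lambda>i. sqrt (l i)) = diag_mat l"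
      using l0 by (simp add: diag_mat_mult_diag_mat real_sqrt_mult[symmetric])
    finally show ?thesis using S by simp
  qed
  ultimately have "psd R \<and> R ** R = S" ..
  hence "psd (matsqrt S) \<and> matsqrt S ** matsqrt S = S"
    unfolding matsqrt_def
  proof (rule theI)
    show "R' = R" if "psd R' \<and> R' ** R' = S" for R'
      using that psd_sqrt_eq_conj_diag_mat[OF U S] unfolding R_def by blast
  qed
  thus "psd (matsqrt S)" "matsqrt S ** matsqrt S = S" by auto
qed

lemma trace_scaleR: "trace (k *\<^sub>R (A::real^'n^'n)) = k * trace A"
  by (simp add: trace_def sum_distrib_left)

lemma trace_mult_psd_nonneg:
  fixes P D :: "real^'n^'n"
  assumes "psd P" "psd D"
  shows "trace (P ** D) \<ge> 0"
proof -
  obtain U :: "real^'n^'n" and l where P: "P = U ** diag_mat l ** transpose U"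
    and l0: "\<forall>i. l i \<ge> 0"
    using psd_diagonalizable[OF assms(1)] by blast
  have "trace (P ** D) = trace (U ** (diag_mat l ** transpose U ** D))"
    unfolding P by (simp add: matrix_mul_assoc)
  also have "\<dots> = trace (diag_mat l ** (transpose U ** D ** U))"
    by (subst trace_mul_sym) (simp add: matrix_mul_assoc)
  also have "\<dots> = (\<Sum>i\<in>UNIV. l i * (column i U \<bullet> (D *v column i U)))"
    by (simp add: trace_def diag_mat_mult_nth transpose_mult_mult_nth)
  also have "\<dots> \<ge> 0"
    using l0 assms(2) unfolding psd_def by (intro sum_nonneg mult_nonneg_nonneg) auto
  finally show ?thesis .
qed

lemma trace_mult_psd_mono:
  fixes P A B :: "real^'n^'n"
  assumes "psd P" "psd (B - A)"
  shows "trace (P ** A) \<le> trace (P ** B)"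
  using trace_mult_psd_nonneg[OF assms] by (simp add: matrix_diff_ldistrib trace_sub)

lemma matrix_inv_cancel:
  fixes A :: "real^'n^'n"
  assumes "invertible A"
  shows "A ** matrix_inv A = mat 1" "matrix_inv A ** A = mat 1"
    "B ** A ** matrix_inv A = B" "C ** matrix_inv A ** A = C"
proof -
  have "\<exists>A'. A ** A' = mat 1 \<and> A' ** A = mat 1" using assms unfolding invertible_def by blast
  hence "A ** matrix_inv A = mat 1 \<and> matrix_inv A ** A = mat 1"
    unfolding matrix_inv_def by (rule someI_ex)
  thus inv: "A ** matrix_inv A = mat 1" "matrix_inv A ** A = mat 1" by auto
  show "B ** A ** matrix_inv A = B" "C ** matrix_inv A ** A = C"
    by (simp_all only: matrix_mul_assoc[symmetric] inv matrix_mul_rid)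
qed

lemma matrix_inv_unique:
  fixes A B :: "real^'n^'n"
  assumes "B ** A = mat 1"
  shows "matrix_inv A = B"
proof -
  have "invertible A" using assms invertible_left_inverse by blast
  hence "B = B ** A ** matrix_inv A" by (simp only: matrix_inv_cancel)
  thus ?thesis using assms by simp
qed

lemma matrix_inv_mult:
  fixes A B :: "real^'n^'n"
  assumes "invertible A" "invertible B"
  shows "matrix_inv (A ** B) = matrix_inv B ** matrix_inv A"
  by (rule matrix_inv_unique)
    (simp add: matrix_mul_assoc matrix_inv_cancel[OF assms(1)] matrix_inv_cancel[OF assms(2)])

lemma matrix_inv_scaleR:
  fixes A :: "real^'n^'n"
  assumes "invertible A" "c \<noteq> 0"
  shows "matrix_inv (c *\<^sub>R A) = (1/c) *\<^sub>R matrix_inv A"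
  by (rule matrix_inv_unique)
    (simp add: assms matrix_inv_cancel[OF assms(1)] matrix_scaleR_left matrix_scaleR_right)

lemma matrix_inv_mat_1: "matrix_inv (mat 1 :: real^'n^'n) = mat 1"
  by (rule matrix_inv_unique) simp

lemma transpose_matrix_inv_symmetric:
  fixes A :: "real^'n^'n"
  assumes "invertible A" "transpose A = A"
  shows "transpose (matrix_inv A) = matrix_inv A"
proof -
  have "transpose (matrix_inv A) ** A = mat 1"
    using arg_cong[OF matrix_inv_cancel(1)[OF assms(1)], of transpose] assms(2)
    by (simp add: matrix_transpose_mul)
  thus ?thesis by (metis matrix_inv_unique)
qed

lemma invertible_if_quadratic_form_pos:
  fixes A :: "real^'n^'n"
  assumes "\<And>x. x \<noteq> 0 \<Longrightarrow> 0 < x \<bullet> (A *v x)"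
  shows "invertible A"
proof -
  have "\<forall>x. A *v x = 0 \<longrightarrow> x = 0" using assms by (metis inner_zero_right less_irrefl)
  thus ?thesis using invertible_left_inverse matrix_left_invertible_ker by blast
qed

lemma quadratic_form_gram_plus_scaleR:
  fixes Z :: "real^'d^'n"
  shows "x \<bullet> ((k *\<^sub>R (Z ** transpose Z) + a *\<^sub>R mat 1) *v x)
    = k * ((transpose Z *v x) \<bullet> (transpose Z *v x)) + a * (x \<bullet> x)"
  using quadratic_form_transpose_mult[where A = "transpose Z" and x = x]
  by (simp add: matrix_vector_mult_add_rdistrib inner_add_right
      scaleR_matrix_vector_assoc[symmetric])

lemma invertible_scaled_gram_plus_scaleR:
  fixes Z :: "real^'d^'n"
  assumes "0 \<le> k" "0 < a"
  shows "invertible (k *\<^sub>R (Z ** transpose Z) + a *\<^sub>R mat 1)"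
  using assms
  by (intro invertible_if_quadratic_form_pos)
    (simp add: quadratic_form_gram_plus_scaleR add_nonneg_pos)

lemma invertible_gram_plus_scaleR:
  fixes A :: "real^'m^'n"
  assumes "a > 0"
  shows "invertible (transpose A ** A + a *\<^sub>R mat 1)"
  using invertible_scaled_gram_plus_scaleR[of 1 a "transpose A"] assms by simp

lemma matrix_inv_scaled_gram_plus_scaleR:
  fixes Z :: "real^'d^'n"
  assumes "0 < d" "0 < k" "0 < s"
  shows "matrix_inv ((1 / d) *\<^sub>R (Z ** transpose Z) + (k * s) *\<^sub>R mat 1)
    = (d / k) *\<^sub>R matrix_inv ((1 / k) *\<^sub>R (Z ** transpose Z) + (d * s) *\<^sub>R mat 1)"
proof -
  have "(1 / d) *\<^sub>R (Z ** transpose Z) + (k * s) *\<^sub>R mat 1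
      = (k / d) *\<^sub>R ((1 / k) *\<^sub>R (Z ** transpose Z) + (d * s) *\<^sub>R mat 1)"
    using assms by (simp add: scaleR_add_right)
  thus ?thesis
    using assms by (simp add: matrix_inv_scaleR invertible_scaled_gram_plus_scaleR)
qed

lemma matrix_inv_intertwine:
  fixes P :: "real^'m^'m" and Q :: "real^'n^'n" and A :: "real^'n^'m"
  assumes "invertible P" "invertible Q" "P ** A = A ** Q"
  shows "matrix_inv P ** A = A ** matrix_inv Q"
proof -
  have "matrix_inv P ** A = matrix_inv P ** (A ** Q) ** matrix_inv Q"
    by (simp add: matrix_mul_assoc matrix_inv_cancel[OF assms(2)])
  also have "\<dots> = A ** matrix_inv Q"
    by (simp add: assms(3)[symmetric] matrix_mul_assoc matrix_inv_cancel[OF assms(1)])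
  finally show ?thesis .
qed

lemma invertible_one_minus_commute:
  fixes A :: "real^'n^'m" and B :: "real^'m^'n"
  assumes "invertible (mat 1 - B ** A)"
  shows "invertible (mat 1 - A ** B)"
proof -
  have "x = 0" if x: "(mat 1 - A ** B) *v x = 0" for x
  proof -
    have "(mat 1 - B ** A) *v (B *v x) = B *v ((mat 1 - A ** B) *v x)"
      by (simp add: matrix_vector_mul_assoc matrix_ring_simps)
    hence "B *v x = 0"
      using x inj_matrix_vector_mult[OF assms] by (metis inj_eq matrix_vector_mult_0_right)
    moreover have "x = (mat 1 - A ** B) *v x + A *v (B *v x)"
      by (simp add: matrix_vector_mult_diff_rdistrib matrix_vector_mul_assoc)
    ultimately show ?thesis using x by simp
  qed
  thus ?thesis using invertible_left_inverse matrix_left_invertible_ker by blast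
qed

text \<open>With y = B\<inverse>x and z = A\<inverse>x, expanding
  (y - z) \<bullet> A (y - z) \<ge> 0 gives x \<bullet> B\<inverse> x \<le> x \<bullet> A\<inverse> x.\<close>
lemma psd_matrix_inv_diff:
  fixes A B :: "real^'n^'n"
  assumes A: "transpose A = A" "invertible A" "\<And>x. 0 \<le> x \<bullet> (A *v x)"
    and B: "transpose B = B" "invertible B"
    and le: "\<And>x. x \<bullet> (A *v x) \<le> x \<bullet> (B *v x)"
  shows "psd (matrix_inv A - matrix_inv B)"
  unfolding psd_def
proof (intro conjI allI)
  show "transpose (matrix_inv A - matrix_inv B) = matrix_inv A - matrix_inv B"
    by (simp add: transpose_diff transpose_matrix_inv_symmetric A B)
  fix x
  define y where "y = matrix_inv B *v x"
  define z where "z = matrix_inv A *v x"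
  have By: "B *v y = x" and Az: "A *v z = x"
    unfolding y_def z_def by (simp_all add: matrix_vector_mul_assoc matrix_inv_cancel A B)
  have "y \<bullet> (A *v z) = z \<bullet> (A *v y)"
    using inner_symmetric_matrix[OF A(1), of y z] by (simp add: inner_commute)
  hence "0 \<le> y \<bullet> (A *v y) - 2 * (y \<bullet> x) + z \<bullet> x"
    using A(3)[of "y - z"] Az
    by (simp add: matrix_vector_mult_diff_distrib inner_diff_left inner_diff_right)
  moreover have "y \<bullet> (A *v y) \<le> y \<bullet> x" using le[of y] By by simp
  ultimately have "y \<bullet> x \<le> z \<bullet> x" by linarith
  thus "0 \<le> x \<bullet> ((matrix_inv A - matrix_inv B) *v x)"
    unfolding y_def z_def
    by (simp add: matrix_vector_mult_diff_rdistrib inner_diff_right inner_commute)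
qed

lemma invertible_iff_not_eigenvalue_0:
  fixes S :: "real^'n^'n"
  shows "invertible S \<longleftrightarrow> \<not> mat_eigenvalue S 0"
  unfolding mat_eigenvalue_def
  by (metis invertible_left_inverse matrix_left_invertible_ker scale_zero_left)

lemma psd_if_posdef: "posdef A \<Longrightarrow> psd A"
  unfolding posdef_def psd_def by (metis inner_zero_left order_le_less)

lemma invertible_if_posdef: "posdef A \<Longrightarrow> invertible A"
  unfolding posdef_def by (simp add: invertible_if_quadratic_form_pos)

lemma psd_if_eigenvalues_nonneg:
  fixes S :: "real^'n^'n"
  assumes "transpose S = S" "\<And>l. mat_eigenvalue S l \<Longrightarrow> 0 \<le> l"
  shows "psd S"
  using quadratic_form_ge_if_eigenvalues_ge[of S 0] assms unfolding psd_def by simp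

lemma invertible_matsqrt:
  fixes S :: "real^'n^'n"
  assumes "psd S" "invertible S"
  shows "invertible (matsqrt S)"
proof -
  have "det (matsqrt S) * det (matsqrt S) \<noteq> 0"
    using assms matsqrt_correct(2)[OF assms(1)] det_mul invertible_det_nz by metis
  thus ?thesis using invertible_det_nz by auto
qed

lemma matsqrt_of_psd_invertible:
  fixes S :: "real^'n^'n"
  assumes "psd S" "invertible S"
  shows "transpose (matsqrt S) = matsqrt S" "matsqrt S ** matsqrt S = S"
    "invertible (matsqrt S)"
  using matsqrt_correct[OF assms(1)] invertible_matsqrt[OF assms] unfolding psd_def by auto

definition frob_inner :: "real^'c^'r \<Rightarrow> real^'c^'r \<Rightarrow> real" where
  "frob_inner U V = (\<Sum>i\<in>UNIV. \<Sum>j\<in>UNIV. U $ i $ j * V $ i $ j)"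

lemma frob2_eq_frob_inner: "frob2 U = frob_inner U U"
  by (simp add: frob2_def frob_inner_def power2_eq_square)

lemma frob_inner_commute: "frob_inner U V = frob_inner V U"
  by (simp add: frob_inner_def mult.commute)

lemma frob_inner_add_left: "frob_inner (U + V) W = frob_inner U W + frob_inner V W"
  by (simp add: frob_inner_def algebra_simps sum.distrib)

lemma frob_inner_add_right: "frob_inner W (U + V) = frob_inner W U + frob_inner W V"
  by (simp add: frob_inner_def algebra_simps sum.distrib)

lemma frob_inner_scaleR_left: "frob_inner (c *\<^sub>R U) V = c * frob_inner U V"
  by (simp add: frob_inner_def sum_distrib_left mult_ac)

lemma frob_inner_scaleR_right: "frob_inner V (c *\<^sub>R U) = c * frob_inner V U"
  by (simp add: frob_inner_def sum_distrib_left mult_ac)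

lemma frob_inner_uminus_left: "frob_inner (- U) V = - frob_inner U V"
  by (simp add: frob_inner_def sum_negf)

lemma frob_inner_uminus_right: "frob_inner V (- U) = - frob_inner V U"
  by (simp add: frob_inner_def sum_negf)

lemma frob_inner_eq_trace: "frob_inner U (V::real^'c^'r) = trace (transpose U ** V)"
proof -
  have "frob_inner U V = (\<Sum>j\<in>UNIV. \<Sum>i\<in>UNIV. U $ i $ j * V $ i $ j)"
    unfolding frob_inner_def by (rule sum.swap)
  thus ?thesis by (simp add: trace_def matrix_matrix_mult_def transpose_def)
qed

lemma frob_inner_mult_right:
  "frob_inner U ((V::real^'k^'r) ** (W::real^'c^'k)) = frob_inner (U ** transpose W) V"
  unfolding frob_inner_eq_trace
  by (metis matrix_mul_assoc matrix_transpose_mul trace_mul_sym transpose_transpose)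

lemma frob_inner_mult_left:
  "frob_inner U ((W::real^'k^'r) ** (V::real^'c^'k)) = frob_inner (transpose W ** U) V"
  unfolding frob_inner_eq_trace by (simp add: matrix_transpose_mul matrix_mul_assoc)

lemma frob2_add: "frob2 (U + V) = frob2 U + 2 * frob_inner U V + frob2 V"
  unfolding frob2_eq_frob_inner
  by (simp add: frob_inner_add_left frob_inner_add_right frob_inner_commute[of V U])

section \<open>Population and training risks of the ridge-type estimator\<close>

definition ridge_gram :: "real \<Rightarrow> real^'d^'n \<Rightarrow> real^'n^'n" where
  "ridge_gram \<sigma> X = X ** transpose X + (real CARD('d) * \<sigma>^2) *\<^sub>R mat 1"

lemma invertible_ridge_gram:
  fixes X :: "real^'d^'n"
  shows "\<sigma> \<noteq> 0 \<Longrightarrow> invertible (ridge_gram \<sigma> X)"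
  using invertible_gram_plus_scaleR[of "real CARD('d) * \<sigma>^2" "transpose X"]
  by (simp add: ridge_gram_def)

lemma ridge_gram_inv_cancel:
  fixes X :: "real^'d^'n"
  assumes "\<sigma> \<noteq> 0"
  shows "X ** transpose X ** matrix_inv (ridge_gram \<sigma> X)
      = mat 1 - (real CARD('d) * \<sigma>^2) *\<^sub>R matrix_inv (ridge_gram \<sigma> X)"
    and "matrix_inv (ridge_gram \<sigma> X) ** X ** transpose X
      = mat 1 - (real CARD('d) * \<sigma>^2) *\<^sub>R matrix_inv (ridge_gram \<sigma> X)"
  using matrix_inv_cancel(1,2)[OF invertible_ridge_gram[OF assms, of X]]
  by (simp_all add: ridge_gram_def matrix_ring_simps algebra_simps)

lemma ridge_gram_push_through:
  fixes X :: "real^'d^'n"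
  assumes "\<sigma> \<noteq> 0"
  shows "matrix_inv (transpose X ** X + (real CARD('d) * \<sigma>^2) *\<^sub>R mat 1) ** transpose X
      = transpose X ** matrix_inv (ridge_gram \<sigma> X)"
  using assms
  by (intro matrix_inv_intertwine invertible_ridge_gram invertible_gram_plus_scaleR)
    (simp_all add: ridge_gram_def matrix_ring_simps)

lemma Arho_zero:
  fixes X :: "real^'d^'n"
  assumes "\<sigma> \<noteq> 0"
  shows "Arho \<sigma> 0 X S = transpose X ** matrix_inv (ridge_gram \<sigma> X)"
  unfolding Arho_def
  by (simp add: matrix_mul_assoc[symmetric] ridge_gram_push_through[OF assms])

lemma calT_eq_frob_inner:
  fixes X :: "real^'d^'n"
  shows "calT \<sigma> X A = frob_inner ((X ** A - mat 1) ** ridge_gram \<sigma> X) (X ** A - mat 1)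
      / (real CARD('n) * real CARD('d))"
proof -
  define N where "N = X ** A - mat 1"
  have "X ** A ** X - X = N ** X" unfolding N_def by (simp add: matrix_ring_simps)
  hence "calT \<sigma> X A = (frob_inner (N ** X) (N ** X)
      + (real CARD('d) * \<sigma>^2) * frob_inner N N) / (real CARD('n) * real CARD('d))"
    unfolding calT_def frob2_eq_frob_inner N_def by (simp add: field_simps)
  also have "frob_inner (N ** X) (N ** X) + (real CARD('d) * \<sigma>^2) * frob_inner N N
      = frob_inner (N ** ridge_gram \<sigma> X) N"
    by (simp add: ridge_gram_def frob_inner_mult_right matrix_add_ldistrib frob_inner_add_left
        frob_inner_scaleR_left matrix_scaleR_right matrix_mul_assoc)
  finally show ?thesis unfolding N_def .
qed

text \<open>A(0) is the minimiser of the population risk: the cross term of the expansion around it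
  vanishes (normal equations), leaving a quadratic form in the deviation.\<close>
lemma calP_sub_calP_ridge:
  fixes X :: "real^'d^'n"
  assumes "\<sigma> \<noteq> 0"
  defines "A0 \<equiv> transpose X ** matrix_inv (ridge_gram \<sigma> X)"
  shows "calP \<sigma> X S A - calP \<sigma> X S A0
    = frob_inner (matsqrt S ** (A - A0) ** ridge_gram \<sigma> X) (matsqrt S ** (A - A0))
      / real CARD('d)"
proof -
  define d where "d = real CARD('d)"
  define R where "R = matsqrt S"
  define V where "V = R ** (A - A0)"
  define U1 where "U1 = R ** (A0 ** X - mat 1)"
  define U2 where "U2 = R ** A0"
  have d: "d > 0" unfolding d_def by simp
  have "U1 ** transpose X = R ** (transpose X ** (matrix_inv (ridge_gram \<sigma> X) ** X ** transpose X))
      - R ** transpose X"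
    unfolding U1_def A0_def by (simp add: matrix_ring_simps)
  also have "\<dots> = - (d * \<sigma>^2) *\<^sub>R U2"
    unfolding ridge_gram_inv_cancel[OF assms(1)] U2_def A0_def d_def
    by (simp add: matrix_ring_simps)
  finally have cross: "frob_inner U1 (V ** X) / d + \<sigma>^2 * frob_inner U2 V = 0"
    using d by (simp add: frob_inner_mult_right frob_inner_uminus_left frob_inner_scaleR_left)
  have quad: "frob_inner (V ** X) (V ** X) / d + \<sigma>^2 * frob_inner V V
      = frob_inner (V ** ridge_gram \<sigma> X) V / d"
    using d by (simp add: ridge_gram_def frob_inner_mult_right matrix_add_ldistrib
        frob_inner_add_left frob_inner_scaleR_left matrix_scaleR_right matrix_mul_assoc
        field_simps d_def)
  have "R ** (A ** X - mat 1) = U1 + V ** X" and "R ** A = U2 + V"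
    unfolding U1_def U2_def V_def by (simp_all add: matrix_ring_simps)
  hence "calP \<sigma> X S A = frob2 (U1 + V ** X) / d + \<sigma>^2 * frob2 (U2 + V)"
    unfolding calP_def R_def d_def by simp
  moreover have "calP \<sigma> X S A0 = frob2 U1 / d + \<sigma>^2 * frob2 U2"
    unfolding calP_def U1_def U2_def R_def d_def ..
  ultimately have expansion: "calP \<sigma> X S A - calP \<sigma> X S A0
      = 2 * (frob_inner U1 (V ** X) / d + \<sigma>^2 * frob_inner U2 V)
        + (frob_inner (V ** X) (V ** X) / d + \<sigma>^2 * frob_inner V V)"
    unfolding frob2_add by (simp add: frob2_eq_frob_inner algebra_simps add_divide_distrib)
  show ?thesis unfolding expansion cross quad by (simp add: V_def R_def d_def)
qed

lemma inv_one_minus_gram: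
  fixes Z :: "real^'d^'n"
  assumes K: "invertible (mat 1 - c *\<^sub>R (transpose Z ** Z))"
  defines "M \<equiv> matrix_inv (mat 1 - c *\<^sub>R (Z ** transpose Z))"
  shows "invertible (mat 1 - c *\<^sub>R (Z ** transpose Z))"
    and "Z ** matrix_inv (mat 1 - c *\<^sub>R (transpose Z ** Z)) = M ** Z"
    and "M ** (Z ** transpose Z) = (Z ** transpose Z) ** M"
    and "M = mat 1 + c *\<^sub>R (M ** (Z ** transpose Z))"
    and "transpose M = M"
proof -
  show L: "invertible (mat 1 - c *\<^sub>R (Z ** transpose Z))"
    using invertible_one_minus_commute[of "c *\<^sub>R transpose Z" Z] K
    by (simp add: matrix_scaleR_left matrix_scaleR_right)
  show "Z ** matrix_inv (mat 1 - c *\<^sub>R (transpose Z ** Z)) = M ** Z"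
    unfolding M_def
    by (rule matrix_inv_intertwine[OF L K, symmetric]) (simp add: matrix_ring_simps)
  show "M ** (Z ** transpose Z) = (Z ** transpose Z) ** M"
    unfolding M_def by (rule matrix_inv_intertwine[OF L L]) (simp add: matrix_ring_simps)
  show "M = mat 1 + c *\<^sub>R (M ** (Z ** transpose Z))"
    using matrix_inv_cancel(2)[OF L] unfolding M_def by (simp add: matrix_ring_simps algebra_simps)
  show "transpose M = M"
    unfolding M_def
    by (rule transpose_matrix_inv_symmetric[OF L]) (simp add: matrix_ring_simps)
qed

lemma Arho_sub_Arho_zero:
  fixes Z :: "real^'d^'n" and S :: "real^'d^'d"
  assumes S: "psd S" "invertible S" and \<sigma>: "\<sigma> \<noteq> 0"
    and K: "invertible (mat 1 - (\<rho> / real CARD('d)) *\<^sub>R (transpose Z ** Z))"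
  defines "X \<equiv> Z ** matsqrt S"
  shows "Arho \<sigma> \<rho> X S - Arho \<sigma> 0 X S = - (\<rho> * \<sigma>^2) *\<^sub>R (matrix_inv (matsqrt S)
      ** matrix_inv (mat 1 - (\<rho> / real CARD('d)) *\<^sub>R (transpose Z ** Z)) ** transpose Z
      ** matrix_inv (ridge_gram \<sigma> X))"
proof -
  define R where "R = matsqrt S"
  define K where "K = mat 1 - (\<rho> / real CARD('d)) *\<^sub>R (transpose Z ** Z)"
  define Q where "Q = matrix_inv (ridge_gram \<sigma> X)"
  note R = matsqrt_of_psd_invertible[OF S, folded R_def]
  have XR: "transpose X = R ** transpose Z"
    unfolding X_def R_def[symmetric] using R(1) by (simp add: matrix_transpose_mul)
  have "S - (\<rho> / real CARD('d)) *\<^sub>R (transpose X ** X) = R ** K ** R"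
    unfolding XR unfolding X_def R_def[symmetric] K_def
    by (simp add: matrix_ring_simps R(2)[symmetric])
  hence "matrix_inv (S - (\<rho> / real CARD('d)) *\<^sub>R (transpose X ** X))
      = matrix_inv R ** matrix_inv K ** matrix_inv R"
    using R(3) K by (simp add: K_def matrix_inv_mult invertible_mult matrix_mul_assoc)
  hence "Arho \<sigma> \<rho> X S = (mat 1 - (\<rho> * \<sigma>^2) *\<^sub>R (matrix_inv R ** matrix_inv K ** matrix_inv R))
      ** (transpose X ** Q)"
    unfolding Arho_def Q_def
    by (simp add: matrix_mul_assoc[symmetric] ridge_gram_push_through[OF \<sigma>])
  also have "\<dots> = transpose X ** Q
      - (\<rho> * \<sigma>^2) *\<^sub>R (matrix_inv R ** matrix_inv K ** (matrix_inv R ** transpose X) ** Q)"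
    by (simp add: matrix_ring_simps)
  also have "matrix_inv R ** transpose X = transpose Z"
    unfolding XR by (simp add: matrix_mul_assoc matrix_inv_cancel[OF R(3)])
  finally show ?thesis
    unfolding Arho_zero[OF \<sigma>] Q_def R_def K_def by simp
qed

lemma Arho_residual:
  fixes Z :: "real^'d^'n" and S :: "real^'d^'d"
  assumes S: "psd S" "invertible S" and \<sigma>: "\<sigma> \<noteq> 0"
    and K: "invertible (mat 1 - (\<rho> / real CARD('d)) *\<^sub>R (transpose Z ** Z))"
  defines "X \<equiv> Z ** matsqrt S"
    and "M \<equiv> matrix_inv (mat 1 - (\<rho> / real CARD('d)) *\<^sub>R (Z ** transpose Z))"
  shows "X ** Arho \<sigma> \<rho> X S - mat 1
    = - (real CARD('d) * \<sigma>^2) *\<^sub>R (M ** matrix_inv (ridge_gram \<sigma> X))"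
proof -
  define d where "d = real CARD('d)"
  define Q where "Q = matrix_inv (ridge_gram \<sigma> X)"
  define G where "G = Z ** transpose Z"
  have d: "d > 0" unfolding d_def by simp
  note M = inv_one_minus_gram[OF K, folded M_def]
  have "X ** matrix_inv (matsqrt S) = Z"
    unfolding X_def by (simp add: matrix_mul_assoc[symmetric] matsqrt_of_psd_invertible(3)[OF S]
        matrix_inv_cancel)
  hence "X ** (Arho \<sigma> \<rho> X S - Arho \<sigma> 0 X S) = - (\<rho> * \<sigma>^2) *\<^sub>R (M ** G ** Q)"
    unfolding Arho_sub_Arho_zero[OF S \<sigma> K, folded X_def] Q_def G_def
    by (simp add: matrix_ring_simps M(2))
  moreover have "X ** Arho \<sigma> 0 X S - mat 1 = - (d * \<sigma>^2) *\<^sub>R Q"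
    unfolding Arho_zero[OF \<sigma>] Q_def d_def
    by (simp add: matrix_mul_assoc ridge_gram_inv_cancel[OF \<sigma>])
  moreover have "(d * \<sigma>^2) *\<^sub>R (M ** Q) = (d * \<sigma>^2) *\<^sub>R Q + (\<rho> * \<sigma>^2) *\<^sub>R (M ** G ** Q)"
    using d by (subst M(4)) (simp add: G_def d_def matrix_ring_simps scaleR_add_right)
  ultimately show ?thesis
    unfolding Q_def d_def by (simp add: matrix_ring_simps algebra_simps)
qed

lemma calT_Arho:
  fixes Z :: "real^'d^'n" and S :: "real^'d^'d"
  assumes S: "psd S" "invertible S" and \<sigma>: "\<sigma> \<noteq> 0"
    and K: "invertible (mat 1 - (\<rho> / real CARD('d)) *\<^sub>R (transpose Z ** Z))"
  defines "X \<equiv> Z ** matsqrt S"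
    and "M \<equiv> matrix_inv (mat 1 - (\<rho> / real CARD('d)) *\<^sub>R (Z ** transpose Z))"
  shows "calT \<sigma> X (Arho \<sigma> \<rho> X S)
    = real CARD('d) * \<sigma>^4 / real CARD('n) * trace (M ** M ** matrix_inv (ridge_gram \<sigma> X))"
proof -
  define a where "a = real CARD('d) * \<sigma>^2"
  define Q where "Q = matrix_inv (ridge_gram \<sigma> X)"
  note M = inv_one_minus_gram[OF K, folded M_def]
  note residual = Arho_residual[OF S \<sigma> K, folded X_def M_def a_def Q_def]
  have "(X ** Arho \<sigma> \<rho> X S - mat 1) ** ridge_gram \<sigma> X = - a *\<^sub>R M"
    unfolding residual Q_def
    by (simp add: matrix_ring_simps matrix_inv_cancel[OF invertible_ridge_gram[OF \<sigma>]])
  hence "calT \<sigma> X (Arho \<sigma> \<rho> X S)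
      = frob_inner (- a *\<^sub>R M) (- a *\<^sub>R (M ** Q)) / (real CARD('n) * real CARD('d))"
    unfolding calT_eq_frob_inner Q_def by (simp only: residual)
  also have "frob_inner (- a *\<^sub>R M) (- a *\<^sub>R (M ** Q)) = a^2 * frob_inner M (M ** Q)"
    by (simp add: frob_inner_scaleR_left frob_inner_scaleR_right frob_inner_uminus_left
        frob_inner_uminus_right power2_eq_square)
  also have "frob_inner M (M ** Q) = trace (M ** M ** Q)"
    by (simp add: frob_inner_eq_trace M(5) matrix_mul_assoc)
  finally show ?thesis
    unfolding Q_def a_def by (simp add: power_mult_distrib field_simps power2_eq_square
        numeral_eq_Suc)
qed

lemma calT_Arho_sub_calT_Arho_zero:
  fixes Z :: "real^'d^'n" and S :: "real^'d^'d"
  assumes S: "psd S" "invertible S" and \<sigma>: "\<sigma> \<noteq> 0"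
    and K: "invertible (mat 1 - (\<rho> / real CARD('d)) *\<^sub>R (transpose Z ** Z))"
  defines "X \<equiv> Z ** matsqrt S"
    and "M \<equiv> matrix_inv (mat 1 - (\<rho> / real CARD('d)) *\<^sub>R (Z ** transpose Z))"
  shows "calT \<sigma> X (Arho \<sigma> \<rho> X S) - calT \<sigma> X (Arho \<sigma> 0 X S)
    = real CARD('d) * \<sigma>^4 / real CARD('n)
      * trace ((M ** M - mat 1) ** matrix_inv (ridge_gram \<sigma> X))"
  using calT_Arho[OF S \<sigma> K] calT_Arho[OF S \<sigma>, where Z = Z and \<rho> = 0]
  unfolding X_def M_def
  by (simp add: invertible_def matrix_inv_mat_1 matrix_diff_rdistrib trace_sub algebra_simps)

lemma frob_inner_inv_one_minus_gram:
  fixes Z :: "real^'d^'n" and Q :: "real^'n^'n"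
  assumes K: "invertible (mat 1 - c *\<^sub>R (transpose Z ** Z))"
  defines "Ki \<equiv> matrix_inv (mat 1 - c *\<^sub>R (transpose Z ** Z))"
    and "M \<equiv> matrix_inv (mat 1 - c *\<^sub>R (Z ** transpose Z))"
  shows "frob_inner (Ki ** transpose Z) (Ki ** transpose Z ** Q)
    = trace (M ** M ** (Z ** transpose Z) ** Q)"
proof -
  define G where "G = Z ** transpose Z"
  note M = inv_one_minus_gram[OF K, folded M_def Ki_def G_def]
  have "transpose (M ** M ** G) = G ** M ** M"
    by (simp add: matrix_transpose_mul M(5) G_def matrix_mul_assoc)
  hence MMG: "transpose (M ** M ** G) = M ** M ** G" by (metis M(3) matrix_mul_assoc)
  have "transpose Ki = Ki"
    unfolding Ki_def by (rule transpose_matrix_inv_symmetric[OF K]) (simp add: matrix_ring_simps)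
  hence "frob_inner (Ki ** transpose Z) (Ki ** transpose Z ** Q)
      = frob_inner (Z ** Ki ** Ki ** transpose Z) Q"
    unfolding frob_inner_mult_left by (simp add: matrix_transpose_mul matrix_mul_assoc)
  also have "Z ** Ki ** Ki ** transpose Z = M ** M ** G"
    by (simp add: M(2) G_def flip: matrix_mul_assoc)
  also have "frob_inner (M ** M ** G) Q = trace (M ** M ** G ** Q)"
    using MMG by (simp add: frob_inner_eq_trace)
  finally show ?thesis unfolding G_def .
qed

lemma calP_Arho_sub_calP_Arho_zero:
  fixes Z :: "real^'d^'n" and S :: "real^'d^'d"
  assumes S: "psd S" "invertible S" and \<sigma>: "\<sigma> \<noteq> 0"
    and K: "invertible (mat 1 - (\<rho> / real CARD('d)) *\<^sub>R (transpose Z ** Z))"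
  defines "X \<equiv> Z ** matsqrt S"
    and "M \<equiv> matrix_inv (mat 1 - (\<rho> / real CARD('d)) *\<^sub>R (Z ** transpose Z))"
  shows "calP \<sigma> X S (Arho \<sigma> \<rho> X S) - calP \<sigma> X S (Arho \<sigma> 0 X S)
    = \<rho>^2 * \<sigma>^4 / real CARD('d)
      * trace (M ** M ** (Z ** transpose Z) ** matrix_inv (ridge_gram \<sigma> X))"
proof -
  define Ki where "Ki = matrix_inv (mat 1 - (\<rho> / real CARD('d)) *\<^sub>R (transpose Z ** Z))"
  define Q where "Q = matrix_inv (ridge_gram \<sigma> X)"
  define G where "G = Z ** transpose Z"
  define V where "V = matsqrt S ** (Arho \<sigma> \<rho> X S - Arho \<sigma> 0 X S)"
  have "matsqrt S ** matrix_inv (matsqrt S) = mat 1"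
    using matrix_inv_cancel matsqrt_of_psd_invertible(3)[OF S] by blast
  hence V: "V = - (\<rho> * \<sigma>^2) *\<^sub>R (Ki ** transpose Z ** Q)"
    unfolding V_def Arho_sub_Arho_zero[OF S \<sigma> K, folded X_def Ki_def] Q_def
    by (simp add: matrix_ring_simps)
  have "V ** ridge_gram \<sigma> X = - (\<rho> * \<sigma>^2) *\<^sub>R (Ki ** transpose Z)"
    unfolding V Q_def
    by (simp add: matrix_ring_simps matrix_inv_cancel[OF invertible_ridge_gram[OF \<sigma>]])
  hence "frob_inner (V ** ridge_gram \<sigma> X) V
      = (\<rho> * \<sigma>^2)^2 * frob_inner (Ki ** transpose Z) (Ki ** transpose Z ** Q)"
    unfolding V by (simp add: frob_inner_scaleR_left frob_inner_scaleR_right frob_inner_uminus_left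
        frob_inner_uminus_right power2_eq_square)
  hence "frob_inner (V ** ridge_gram \<sigma> X) V = \<rho>^2 * \<sigma>^4 * trace (M ** M ** G ** Q)"
    unfolding frob_inner_inv_one_minus_gram[OF K, folded Ki_def M_def G_def]
    by (simp add: power_mult_distrib flip: power_mult)
  moreover have "calP \<sigma> X S (Arho \<sigma> \<rho> X S) - calP \<sigma> X S (Arho \<sigma> 0 X S)
      = frob_inner (V ** ridge_gram \<sigma> X) V / real CARD('d)"
    unfolding V_def Arho_zero[OF \<sigma>] by (rule calP_sub_calP_ridge[OF \<sigma>])
  ultimately show ?thesis unfolding Q_def G_def by simp
qed

text \<open>Writing x = (1 - c Z Z^T) y with y = M x, the hypothesis c |Z u|^2 \<le> |u|^2 at u = Z^T y
  shows |x| \<le> |y|, i.e. M is expansive.\<close>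
lemma psd_inv_one_minus_gram_square_sub_one:
  fixes Z :: "real^'d^'n"
  assumes c: "c \<ge> 0" and K: "psd (mat 1 - c *\<^sub>R (transpose Z ** Z))"
    "invertible (mat 1 - c *\<^sub>R (transpose Z ** Z))"
  defines "M \<equiv> matrix_inv (mat 1 - c *\<^sub>R (Z ** transpose Z))"
  shows "psd (M ** M - mat 1)"
  unfolding psd_def
proof (intro conjI allI)
  note M = inv_one_minus_gram[OF K(2), folded M_def]
  show "transpose (M ** M - mat 1) = M ** M - mat 1"
    by (simp add: transpose_diff matrix_transpose_mul M(5))
  fix x :: "real^'n"
  define y where "y = M *v x"
  define u where "u = transpose Z *v y"
  have "x = (mat 1 - c *\<^sub>R (Z ** transpose Z)) *v y"
    unfolding y_def M_def by (simp add: matrix_vector_mul_assoc matrix_inv_cancel M(1))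
  moreover have "(Z ** transpose Z) *v y = Z *v u"
    unfolding u_def by (simp only: matrix_vector_mul_assoc)
  ultimately have x: "x = y - c *\<^sub>R (Z *v u)"
    by (simp add: matrix_vector_mult_diff_rdistrib scaleR_matrix_vector_assoc[symmetric])
  have yZu: "y \<bullet> (Z *v u) = u \<bullet> u"
    unfolding u_def by (simp add: inner_matrix_vector_transpose inner_commute)
  have "0 \<le> u \<bullet> ((mat 1 - c *\<^sub>R (transpose Z ** Z)) *v u)"
    using K(1) unfolding psd_def by blast
  hence Zu: "c * ((Z *v u) \<bullet> (Z *v u)) \<le> u \<bullet> u"
    by (simp add: matrix_vector_mult_diff_rdistrib inner_diff_right quadratic_form_transpose_mult
        scaleR_matrix_vector_assoc[symmetric])
  have "x \<bullet> x = y \<bullet> y - 2 * c * (u \<bullet> u) + c^2 * ((Z *v u) \<bullet> (Z *v u))"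
    unfolding x using yZu
    by (simp add: inner_diff_left inner_diff_right inner_commute power2_eq_square algebra_simps)
  also have "\<dots> \<le> y \<bullet> y"
  proof -
    have "c^2 * ((Z *v u) \<bullet> (Z *v u)) \<le> c * (u \<bullet> u)"
      using mult_left_mono[OF Zu c] by (simp add: power2_eq_square mult.assoc)
    moreover have "0 \<le> c * (u \<bullet> u)" using c by simp
    ultimately show ?thesis by linarith
  qed
  also have "y \<bullet> y = x \<bullet> ((M ** M) *v x)"
    unfolding y_def
    by (metis inner_matrix_vector_transpose M(5) matrix_vector_mul_assoc)
  finally show "0 \<le> x \<bullet> ((M ** M - mat 1) *v x)"
    by (simp add: matrix_vector_mult_diff_rdistrib inner_diff_right)
qed

lemma psd_inv_one_minus_gram_square_mult_gram:
  fixes Z :: "real^'d^'n"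
  assumes K: "invertible (mat 1 - c *\<^sub>R (transpose Z ** Z))"
  defines "M \<equiv> matrix_inv (mat 1 - c *\<^sub>R (Z ** transpose Z))"
  shows "psd (M ** M ** (Z ** transpose Z))"
proof -
  note M = inv_one_minus_gram[OF K, folded M_def]
  have "transpose (transpose Z ** M) ** (transpose Z ** M) = M ** (Z ** transpose Z) ** M"
    by (simp add: matrix_transpose_mul M(5) matrix_mul_assoc)
  also have "\<dots> = M ** M ** (Z ** transpose Z)" by (metis M(3) matrix_mul_assoc)
  finally show ?thesis by (metis psd_transpose_mult)
qed

text \<open>Spectral bounds lo \<le> S \<le> hi sandwich X X^T = Z S Z^T between lo Z Z^T and hi Z Z^T; inversion
  reverses the order.\<close>
lemma psd_ridge_gram_inv_bounds:
  fixes Z :: "real^'d^'n" and S :: "real^'d^'d"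
  assumes S: "transpose S = S" "\<And>l. mat_eigenvalue S l \<Longrightarrow> lo \<le> l \<and> l \<le> hi"
    and lo: "0 \<le> lo" and \<sigma>: "\<sigma> \<noteq> 0"
  defines "X \<equiv> Z ** matsqrt S" and "a \<equiv> real CARD('d) * \<sigma>^2"
  shows "psd (matrix_inv (ridge_gram \<sigma> X) - matrix_inv (hi *\<^sub>R (Z ** transpose Z) + a *\<^sub>R mat 1))"
    and "psd (matrix_inv (lo *\<^sub>R (Z ** transpose Z) + a *\<^sub>R mat 1) - matrix_inv (ridge_gram \<sigma> X))"
proof -
  have a: "a > 0" unfolding a_def using \<sigma> by simp
  have "psd S" using psd_if_eigenvalues_nonneg S lo by (meson order_trans)
  hence "X ** transpose X = Z ** (matsqrt S ** matsqrt S) ** transpose Z"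
    unfolding X_def using matsqrt_correct(1)[of S] unfolding psd_def
    by (simp add: matrix_transpose_mul matrix_mul_assoc)
  hence "X ** transpose X = Z ** S ** transpose Z" using matsqrt_correct(2)[OF \<open>psd S\<close>] by simp
  hence XX: "x \<bullet> (ridge_gram \<sigma> X *v x)
      = (transpose Z *v x) \<bullet> (S *v (transpose Z *v x)) + a * (x \<bullet> x)" for x
    unfolding ridge_gram_def a_def
    by (simp add: matrix_vector_mult_add_rdistrib inner_add_right quadratic_form_conj
        scaleR_matrix_vector_assoc[symmetric])
  have lo_S: "lo * (v \<bullet> v) \<le> v \<bullet> (S *v v)" and S_hi: "v \<bullet> (S *v v) \<le> hi * (v \<bullet> v)" for v
    using quadratic_form_ge_if_eigenvalues_ge[OF S(1)] quadratic_form_le_if_eigenvalues_le[OF S(1)]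
      S(2) by blast+
  have hi: "0 \<le> hi" using order_trans[OF lo_S S_hi, of 1] lo by (simp add: mult_le_cancel_right)
  have gram: "transpose (k *\<^sub>R (Z ** transpose Z) + a *\<^sub>R mat 1)
      = k *\<^sub>R (Z ** transpose Z) + a *\<^sub>R mat 1"
    "invertible (k *\<^sub>R (Z ** transpose Z) + a *\<^sub>R mat 1)" if "0 \<le> k" for k
    using invertible_scaled_gram_plus_scaleR[OF that a] by (simp_all add: matrix_ring_simps)
  have R: "transpose (ridge_gram \<sigma> X) = ridge_gram \<sigma> X" "invertible (ridge_gram \<sigma> X)"
    using invertible_ridge_gram[OF \<sigma>] by (simp_all add: ridge_gram_def matrix_ring_simps)
  show "psd (matrix_inv (ridge_gram \<sigma> X) - matrix_inv (hi *\<^sub>R (Z ** transpose Z) + a *\<^sub>R mat 1))"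
    using R gram[OF hi] a
    by (intro psd_matrix_inv_diff)
      (simp_all add: XX quadratic_form_gram_plus_scaleR S_hi mult_nonneg_nonneg
        order_trans[OF _ lo_S] lo)
  show "psd (matrix_inv (lo *\<^sub>R (Z ** transpose Z) + a *\<^sub>R mat 1) - matrix_inv (ridge_gram \<sigma> X))"
    using R gram[OF lo] a
    by (intro psd_matrix_inv_diff)
      (simp_all add: XX quadratic_form_gram_plus_scaleR lo_S lo)
qed

theorem lemma7:
  fixes Z :: "real^'d^'n" and S :: "real^'d^'d" and \<sigma> \<rho> \<kappa> :: real
  assumes "CARD('n) \<le> CARD('d)"
    and "invertible (Z ** transpose Z)"
    and "transpose S = S"
    and "\<kappa> > 0"
    and "\<forall>l. mat_eigenvalue S l \<longrightarrow> 1 / \<kappa> \<le> l \<and> l \<le> 1"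
    and "\<sigma> > 0"
    and "\<rho> \<ge> 0"
    and "posdef (mat 1 - (\<rho> / real CARD('d)) *\<^sub>R (transpose Z ** Z))"
  shows
    "let d = real CARD('d); n = real CARD('n); X = Z ** matsqrt S;
         G = Z ** transpose Z;
         M = matrix_inv (mat 1 - (\<rho> / d) *\<^sub>R G)
     in calP \<sigma> X S (Arho \<sigma> \<rho> X S) - calP \<sigma> X S (Arho \<sigma> 0 X S)
          \<ge> \<rho>^2 * \<sigma>^4 / d *
             trace (M ** M ** ((1 / d) *\<^sub>R G) ** matrix_inv ((1 / d) *\<^sub>R G + \<sigma>^2 *\<^sub>R mat 1))
      \<and> calT \<sigma> X (Arho \<sigma> \<rho> X S) - calT \<sigma> X (Arho \<sigma> 0 X S)
          \<le> \<kappa> * \<sigma>^4 / n *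
             trace ((M ** M - mat 1) ** matrix_inv ((1 / d) *\<^sub>R G + (\<kappa> * \<sigma>^2) *\<^sub>R mat 1))"
proof -
  define d where "d = real CARD('d)"
  define n where "n = real CARD('n)"
  define X where "X = Z ** matsqrt S"
  define G where "G = Z ** transpose Z"
  define M where "M = matrix_inv (mat 1 - (\<rho> / d) *\<^sub>R G)"
  define Q where "Q = matrix_inv (ridge_gram \<sigma> X)"
  have d: "d > 0" and \<sigma>: "\<sigma> \<noteq> 0" using assms(6) by (simp_all add: d_def)
  have eig: "\<And>l. mat_eigenvalue S l \<Longrightarrow> 1 / \<kappa> \<le> l \<and> l \<le> 1" using assms(5) by blast
  have "0 < 1 / \<kappa>" using assms(4) by simp
  hence S: "psd S" "invertible S"
    using psd_if_eigenvalues_nonneg[OF assms(3)] invertible_iff_not_eigenvalue_0 eig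
    by (meson less_le_trans less_imp_le not_le)+
  have K: "psd (mat 1 - (\<rho> / d) *\<^sub>R (transpose Z ** Z))"
    "invertible (mat 1 - (\<rho> / d) *\<^sub>R (transpose Z ** Z))"
    using psd_if_posdef invertible_if_posdef assms(8) unfolding d_def by blast+
  have bounds: "psd (Q - matrix_inv (G + (d * \<sigma>^2) *\<^sub>R mat 1))"
    "psd (matrix_inv ((1 / \<kappa>) *\<^sub>R G + (d * \<sigma>^2) *\<^sub>R mat 1) - Q)"
    using psd_ridge_gram_inv_bounds[where Z = Z and lo = "1 / \<kappa>" and hi = 1] assms(3,4) eig \<sigma>
    unfolding Q_def X_def G_def d_def by auto
  have "\<rho>^2 * \<sigma>^4 / d * trace (M ** M ** ((1 / d) *\<^sub>R G)
      ** matrix_inv ((1 / d) *\<^sub>R G + \<sigma>^2 *\<^sub>R mat 1))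
      = \<rho>^2 * \<sigma>^4 / d * trace (M ** M ** G ** matrix_inv (G + (d * \<sigma>^2) *\<^sub>R mat 1))"
    using matrix_inv_scaled_gram_plus_scaleR[of d 1 "\<sigma>^2" Z] d assms(6)
    by (simp add: G_def matrix_scaleR_left matrix_scaleR_right trace_scaleR)
  also have "\<dots> \<le> \<rho>^2 * \<sigma>^4 / d * trace (M ** M ** G ** Q)"
    using trace_mult_psd_mono[OF psd_inv_one_minus_gram_square_mult_gram[OF K(2)] bounds(1)] d
    unfolding M_def G_def by (intro mult_left_mono) simp_all
  also have "\<dots> = calP \<sigma> X S (Arho \<sigma> \<rho> X S) - calP \<sigma> X S (Arho \<sigma> 0 X S)"
    using calP_Arho_sub_calP_Arho_zero[OF S \<sigma> K(2)[unfolded d_def]]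
    unfolding X_def M_def G_def Q_def d_def by simp
  finally have P: "\<dots> \<ge> \<rho>^2 * \<sigma>^4 / d * trace (M ** M ** ((1 / d) *\<^sub>R G)
      ** matrix_inv ((1 / d) *\<^sub>R G + \<sigma>^2 *\<^sub>R mat 1))" .
  have "calT \<sigma> X (Arho \<sigma> \<rho> X S) - calT \<sigma> X (Arho \<sigma> 0 X S)
      = d * \<sigma>^4 / n * trace ((M ** M - mat 1) ** Q)"
    using calT_Arho_sub_calT_Arho_zero[OF S \<sigma> K(2)[unfolded d_def]]
    unfolding X_def M_def G_def Q_def d_def n_def by simp
  also have "\<dots> \<le> d * \<sigma>^4 / n * trace ((M ** M - mat 1)
      ** matrix_inv ((1 / \<kappa>) *\<^sub>R G + (d * \<sigma>^2) *\<^sub>R mat 1))"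
    using trace_mult_psd_mono[OF psd_inv_one_minus_gram_square_sub_one[OF _ K] bounds(2)]
      assms(7) d unfolding M_def G_def n_def by (intro mult_left_mono) simp_all
  also have "\<dots> = \<kappa> * \<sigma>^4 / n * trace ((M ** M - mat 1)
      ** matrix_inv ((1 / d) *\<^sub>R G + (\<kappa> * \<sigma>^2) *\<^sub>R mat 1))"
    using matrix_inv_scaled_gram_plus_scaleR[of d \<kappa> "\<sigma>^2" Z] d assms(4,6)
    by (simp add: G_def matrix_scaleR_right trace_scaleR)
  finally have T: "calT \<sigma> X (Arho \<sigma> \<rho> X S) - calT \<sigma> X (Arho \<sigma> 0 X S) \<le> \<dots>" .
  show ?thesis
    using P T unfolding Let_def d_def n_def X_def G_def M_def by simp
qed

end
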